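(* Let $\varphi_1,\dots,\varphi_k\in\mathrm{Cvx}(\mathbb{R}^n)$ satisfy $\varphi_i(x)\ge 0$ for all $1\le i\le k$ and $x\in\mathbb{R}^n$, and let $\lambda_1,\dots,\lambda_k>0$. Define \[ g_1(x)=\inf\Big\{\sum_{i=1}^k\lambda_i\varphi_i(y_i):\ \sum_{i=1}^k\lambda_iy_i=x\Big\},\qquad g_2(x)=\inf\Big\{\max_{1\le i\le k}\varphi_i(y_i):\ \sum_{i=1}^k\lambda_iy_i=x\Big\}, \] i.e. $g_1=\lambda_1\cdot\varphi_1\,\square\,\cdots\,\square\,\lambda_k\cdot\varphi_k$ and $g_2=\lambda_1\odot\varphi_1\oplus\cdots\oplus\lambda_k\odot\varphi_k$. Then for every $x\in\mathbb{R}^n$, \[ \Big(\sum_{i}\lambda_i\Big)^{-1}g_1(x)\le g_2(x)\le\big(\min_i\lambda_i\big)^{-1}g_1(x). \]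
   Context: $\mathrm{Cvx}(\mathbb{R}^n)$ is the class of convex lower semicontinuous functions $\varphi:\mathbb{R}^n\to(-\infty,\infty]$. The inf-convolution is $(\varphi\,\square\,\psi)(x)=\inf_y[\varphi(y)+\psi(x-y)]$ with homothety $(\lambda\cdot\varphi)(x)=\lambda\varphi(x/\lambda)$; the operation $\oplus$ is $(\varphi\oplus\psi)(x)=\inf_y\max\{\varphi(y),\psi(x-y)\}$ with homothety $(\lambda\odot\varphi)(x)=\varphi(x/\lambda)$. *)

theory Defs
  imports "HOL-Analysis.Analysis"
begin

text \<open>Cvx(R^n): convex lower semicontinuous functions with values in (-inf, inf],
  expressed via the epigraph: convex and closed epigraph, never -inf.\<close>
definition cvx :: "('a::euclidean_space \<Rightarrow> ereal) \<Rightarrow> bool" where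
  "cvx \<phi> \<longleftrightarrow> (\<forall>x. \<phi> x \<noteq> -\<infinity>)
     \<and> convex {(x, t::real). \<phi> x \<le> ereal t}
     \<and> closed {(x, t::real). \<phi> x \<le> ereal t}"

definition g1 :: "nat \<Rightarrow> (nat \<Rightarrow> real) \<Rightarrow> (nat \<Rightarrow> 'a::euclidean_space \<Rightarrow> ereal) \<Rightarrow> 'a \<Rightarrow> ereal" where
  "g1 k lam \<phi> x = Inf {(\<Sum>i<k. ereal (lam i) * \<phi> i (y i)) | y. (\<Sum>i<k. lam i *\<^sub>R y i) = x}"

definition g2 :: "nat \<Rightarrow> (nat \<Rightarrow> real) \<Rightarrow> (nat \<Rightarrow> 'a::euclidean_space \<Rightarrow> ereal) \<Rightarrow> 'a \<Rightarrow> ereal" where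
  "g2 k lam \<phi> x = Inf {Max ((\<lambda>i. \<phi> i (y i)) ` {..<k}) | y. (\<Sum>i<k. lam i *\<^sub>R y i) = x}"

end

theory Submission
  imports Defs
begin

text \<open>Both infima range over the same decompositions \<open>x = (\<Sum>i<k. \<lambda>\<^sub>i y\<^sub>i)\<close>. For each fixed
  decomposition, with \<open>M = max\<^sub>i \<phi>\<^sub>i(y\<^sub>i)\<close> and nonnegative values, the weighted sum
  \<open>(\<Sum>i. \<lambda>\<^sub>i \<phi>\<^sub>i(y\<^sub>i))\<close> lies between \<open>(min\<^sub>i \<lambda>\<^sub>i) M\<close> (keep only the term attaining \<open>M\<close>) and
  \<open>(\<Sum>i. \<lambda>\<^sub>i) M\<close>. Passing to the infimum over all decompositions preserves these bounds,
  since multiplication by a positive constant commutes with infima.\<close>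

lemma ereal_le_inverse_mult_iff:
  fixes a b :: ereal
  assumes "c > 0"
  shows "a \<le> ereal (1 / c) * b \<longleftrightarrow> ereal c * a \<le> b"
  using assms by (cases a b rule: ereal2_cases) (auto simp: field_simps)

lemma ereal_inverse_mult_le_iff:
  fixes a b :: ereal
  assumes "c > 0"
  shows "ereal (1 / c) * a \<le> b \<longleftrightarrow> a \<le> ereal c * b"
  using ereal_le_inverse_mult_iff[of "1 / c" a b] assms by simp

lemma Inf_le_scaled_Inf:
  fixes f g :: "'b \<Rightarrow> ereal"
  assumes "c > 0" and "\<And>y. P y \<Longrightarrow> f y \<le> ereal c * g y"
  shows "Inf {f y | y. P y} \<le> ereal c * Inf {g y | y. P y}"
proof -
  have "ereal (1 / c) * Inf {f y | y. P y} \<le> Inf {g y | y. P y}"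
  proof (rule Inf_greatest)
    fix b assume "b \<in> {g y | y. P y}"
    then obtain y where "P y" and b: "b = g y" by blast
    have "ereal (1 / c) * Inf {f y | y. P y} \<le> ereal (1 / c) * f y"
      using \<open>P y\<close> \<open>c > 0\<close> by (intro ereal_mult_left_mono Inf_lower) auto
    also have "\<dots> \<le> g y"
      using assms \<open>P y\<close> by (simp add: ereal_inverse_mult_le_iff)
    finally show "ereal (1 / c) * Inf {f y | y. P y} \<le> b" by (simp add: b)
  qed
  then show ?thesis using \<open>c > 0\<close> by (simp add: ereal_inverse_mult_le_iff)
qed

lemma weighted_sum_le_sum_weights_times_Max:
  fixes lam :: "'i \<Rightarrow> real" and f :: "'i \<Rightarrow> ereal"
  assumes "finite A" and "\<And>i. i \<in> A \<Longrightarrow> lam i \<ge> 0"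
  shows "(\<Sum>i\<in>A. ereal (lam i) * f i) \<le> ereal (\<Sum>i\<in>A. lam i) * Max (f ` A)"
proof -
  have "(\<Sum>i\<in>A. ereal (lam i) * f i) \<le> (\<Sum>i\<in>A. ereal (lam i) * Max (f ` A))"
    using assms by (intro sum_mono ereal_mult_left_mono) auto
  also have "\<dots> = ereal (\<Sum>i\<in>A. lam i) * Max (f ` A)"
    using assms by (simp add: sum_ereal_left_distrib[symmetric])
  finally show ?thesis .
qed

lemma Min_weight_times_Max_le_weighted_sum:
  fixes lam :: "'i \<Rightarrow> real" and f :: "'i \<Rightarrow> ereal"
  assumes "finite A" "A \<noteq> {}"
    and "\<And>i. i \<in> A \<Longrightarrow> lam i \<ge> 0" and "\<And>i. i \<in> A \<Longrightarrow> f i \<ge> 0"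
  shows "ereal (Min (lam ` A)) * Max (f ` A) \<le> (\<Sum>i\<in>A. ereal (lam i) * f i)"
proof -
  obtain j where "j \<in> A" and j: "Max (f ` A) = f j"
    using Max_in[of "f ` A"] assms(1,2) by blast
  have "ereal (Min (lam ` A)) * f j \<le> ereal (lam j) * f j"
    using \<open>j \<in> A\<close> assms by (intro ereal_mult_right_mono) auto
  also have "\<dots> = (\<Sum>i\<in>{j}. ereal (lam i) * f i)" by simp
  also have "\<dots> \<le> (\<Sum>i\<in>A. ereal (lam i) * f i)"
    using \<open>j \<in> A\<close> assms by (intro sum_mono2) auto
  finally show ?thesis by (simp add: j)
qed

theorem proposition2p8:
  fixes k :: nat and lam :: "nat \<Rightarrow> real" and \<phi> :: "nat \<Rightarrow> 'a::euclidean_space \<Rightarrow> ereal"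
  assumes "k \<ge> 1"
    and "\<And>i. i < k \<Longrightarrow> cvx (\<phi> i)"
    and "\<And>i x. i < k \<Longrightarrow> \<phi> i x \<ge> 0"
    and "\<And>i. i < k \<Longrightarrow> lam i > 0"
  shows "ereal (1 / (\<Sum>i<k. lam i)) * g1 k lam \<phi> x \<le> g2 k lam \<phi> x
       \<and> g2 k lam \<phi> x \<le> ereal (1 / Min (lam ` {..<k})) * g1 k lam \<phi> x"
proof
  have nonempty: "{..<k} \<noteq> {}" using \<open>k \<ge> 1\<close> by (simp add: lessThan_empty_iff)
  have weights_nonneg: "\<And>i. i \<in> {..<k} \<Longrightarrow> lam i \<ge> 0" using assms(4) by fastforce
  have sum_pos: "(\<Sum>i<k. lam i) > 0" using nonempty assms(4) by (intro sum_pos) auto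
  have Min_pos: "Min (lam ` {..<k}) > 0" using nonempty assms(4) by auto
  have "g1 k lam \<phi> x \<le> ereal (\<Sum>i<k. lam i) * g2 k lam \<phi> x"
    unfolding g1_def g2_def using sum_pos weights_nonneg
    by (intro Inf_le_scaled_Inf weighted_sum_le_sum_weights_times_Max) auto
  then show "ereal (1 / (\<Sum>i<k. lam i)) * g1 k lam \<phi> x \<le> g2 k lam \<phi> x"
    using sum_pos by (simp add: ereal_inverse_mult_le_iff)
  show "g2 k lam \<phi> x \<le> ereal (1 / Min (lam ` {..<k})) * g1 k lam \<phi> x"
    unfolding g1_def g2_def using Min_pos weights_nonneg nonempty assms(3)
    by (intro Inf_le_scaled_Inf)
      (auto simp: ereal_le_inverse_mult_iff intro: Min_weight_times_Max_le_weighted_sum)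
qed

end
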